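(* Assume $\gamma=0$, $L$ is conformal, and $r,s$ are not both roots of unity. Suppose $\mathcal S(r,s)$ is generated by $(jm,m)$ for some integers $j\ge0$, $m>0$ (so $s^m=r^{jm}$), and that $\psi(h)=Ch^j$ with $C\neq0$. Let $M$ be a simple $L$-module with $hM=HM=M$. If $H^m-C^mh^{jm}\in\operatorname{ann}M$, then $\operatorname{ann}M$ contains $u^m$ or $d^m$.
   Context: Let $r,s\in\mathbb C^\times$, $\phi\in\mathbb C[x]$, and $L=L(\phi,r,s,0)$ the associative $\mathbb C$-algebra generated by $u,d,h$ with $hu=ruh$, $dh=rhd$, $du-sud=\phi(h)$. $L$ is conformal if there is $\psi\in\mathbb C[x]$ with $s\psi(x)-\psi(rx)=\phi(x)$; fix such $\psi$ and set $H=ud+\psi(h)$. $\mathcal S(r,s)=\{(i,j)\in\mathbb Z\times\mathbb Z: r^i=s^j\}$, an additive subgroup of $\mathbb Z^2$, which is cyclic when $r,s$ are not both roots of unity. Modules are left modules. *)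

theory Defs
  imports Complex_Main "HOL-Computational_Algebra.Polynomial"
begin

text \<open>A module over the down-up algebra L(phi,r,s,0) is a complex vector space M
(scalar multiplication sc) with linear operators U, D, Hh (actions of u, d, h)
satisfying the defining relations.\<close>

definition poly_op :: "(complex \<Rightarrow> 'm \<Rightarrow> 'm) \<Rightarrow> complex poly \<Rightarrow> ('m \<Rightarrow> 'm) \<Rightarrow> 'm \<Rightarrow> ('m::ab_group_add)"
  where "poly_op sc p T x = (\<Sum>i\<le>degree p. sc (coeff p i) ((T ^^ i) x))"

definition downup_module ::
  "(complex \<Rightarrow> 'm::ab_group_add \<Rightarrow> 'm) \<Rightarrow> complex poly \<Rightarrow> complex \<Rightarrow> complex \<Rightarrow>
   ('m \<Rightarrow> 'm) \<Rightarrow> ('m \<Rightarrow> 'm) \<Rightarrow> ('m \<Rightarrow> 'm) \<Rightarrow> bool" where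
  "downup_module sc phi r s U D Hh \<longleftrightarrow>
     vector_space sc \<and>
     Vector_Spaces.linear sc sc U \<and> Vector_Spaces.linear sc sc D \<and> Vector_Spaces.linear sc sc Hh \<and>
     (\<forall>x. Hh (U x) = sc r (U (Hh x))) \<and>
     (\<forall>x. D (Hh x) = sc r (Hh (D x))) \<and>
     (\<forall>x. D (U x) - sc s (U (D x)) = poly_op sc phi Hh x)"

definition simple_downup_module ::
  "(complex \<Rightarrow> 'm::ab_group_add \<Rightarrow> 'm) \<Rightarrow> complex poly \<Rightarrow> complex \<Rightarrow> complex \<Rightarrow>
   ('m \<Rightarrow> 'm) \<Rightarrow> ('m \<Rightarrow> 'm) \<Rightarrow> ('m::ab_group_add \<Rightarrow> 'm) \<Rightarrow> bool" where
  "simple_downup_module sc phi r s U D Hh \<longleftrightarrow>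
     downup_module sc phi r s U D Hh \<and>
     (\<exists>x::'m. x \<noteq> 0) \<and>
     (\<forall>N. module.subspace sc N \<and> U ` N \<subseteq> N \<and> D ` N \<subseteq> N \<and> Hh ` N \<subseteq> N
          \<longrightarrow> N = {0} \<or> N = UNIV)"

definition S_rs :: "complex \<Rightarrow> complex \<Rightarrow> (int \<times> int) set" where
  "S_rs r s = {(i, k). r powi i = s powi k}"

definition root_of_unity :: "complex \<Rightarrow> bool" where
  "root_of_unity z \<longleftrightarrow> (\<exists>n::nat. n > 0 \<and> z ^ n = 1)"

end

theory Submission
  imports Defs
begin

(*
  Let M be a simple module over the conformal down-up algebra with psi(h) = C h^j and write
  Psi = psi(h), H = ud + Psi and omega = r^j / s.  The hypotheses on S(r,s) say that omega is
  a primitive m-th root of unity, i.e. r^(jm) = s^m but r^(jk) <> s^k for 0 < k < m.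

  1. From the defining relations:  H u = s u H,  d H = s H d,  H commutes with h and Psi,
     Psi u = r^j u Psi,  d Psi = r^j Psi d.  Hence d u^m = s^m u^m d and d^m u = s^m u d^m,
     so ker u^m and ker d^m are submodules; by simplicity u^m (resp. d^m) is injective or 0.
  2. h is injective (its kernel is a submodule and h is onto), hence so is Psi.
  3. Suppose u and d are both injective.  If H z = omega^l Psi z with l < m, then
     w = d^(m-l) z satisfies H w = Psi w, i.e. u d w = 0, so z = 0.  Since H^m = Psi^m and
     H, Psi commute, the telescoping sums S_q = sum_k q^(m-1-k) H^k Psi^(m-1-k) x satisfy
     (H - q Psi) S_q = 0 for q = omega^l, hence S_q = 0; summing over l gives m H^(m-1) = 0,
     so Psi^m = H^m = 0, contradicting injectivity of Psi.
  The theorem follows: if neither u^m nor d^m vanishes, both are injective, hence so are u, d.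
*)

lemma poly_op_monom:
  assumes "vector_space sc"
  shows "poly_op sc (monom c k) T x = sc c ((T ^^ k) x)"
proof -
  interpret vector_space sc by fact
  show ?thesis
  proof (cases "c = 0")
    case False
    have "poly_op sc (monom c k) T x = (\<Sum>i\<le>k. if k = i then sc c ((T ^^ i) x) else 0)"
      by (simp add: poly_op_def degree_monom_eq[OF False] if_distrib[of "\<lambda>a. sc a _"] cong: if_cong)
    then show ?thesis by (simp add: sum.delta)
  qed (simp add: poly_op_def)
qed

locale complex_space = vector_space sc
  for sc :: "complex \<Rightarrow> 'm::ab_group_add \<Rightarrow> 'm"
begin

abbreviation lin :: "('m \<Rightarrow> 'm) \<Rightarrow> bool" where
  "lin f \<equiv> Vector_Spaces.linear sc sc f"

lemma lin_add: "lin f \<Longrightarrow> f (x + y) = f x + f y"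
  by (simp add: Vector_Spaces.linear_iff)

lemma lin_scale: "lin f \<Longrightarrow> f (sc a x) = sc a (f x)"
  by (simp add: Vector_Spaces.linear_iff)

lemma lin_zero: "lin f \<Longrightarrow> f 0 = 0"
  using lin_scale[of f 0 0] by simp

lemma lin_diff: "lin f \<Longrightarrow> f (x - y) = f x - f y"
  using lin_add[of f "x - y" y] by (simp add: eq_diff_eq)

lemma lin_sum: "lin f \<Longrightarrow> f (sum g A) = (\<Sum>a\<in>A. f (g a))"
  by (induct A rule: infinite_finite_induct) (simp_all add: lin_zero lin_add)

lemma lin_closed:
  assumes "lin f" "lin g"
  shows "lin (\<lambda>x. f (g x))" and "lin (\<lambda>x. f x + g x)" and "lin (\<lambda>x. sc c (f x))"
  using assms vector_space_axioms
  by (auto simp: Vector_Spaces.linear_iff scale_right_distrib mult.commute)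

lemma lin_funpow: "lin f \<Longrightarrow> lin (f ^^ n)"
  by (induct n) (simp_all add: linear_id Vector_Spaces.linear_compose)

end

text \<open>A module over L(phi,r,s,0) with phi(x) = C (s - r^j) x^j, the conformal algebra with
  psi(x) = C x^j.  Psi is the action of psi(h) and H = ud + psi(h).\<close>

locale downup_monomial = complex_space sc
  for sc :: "complex \<Rightarrow> 'm::ab_group_add \<Rightarrow> 'm" +
  fixes U D Hh :: "'m \<Rightarrow> 'm" and r s C :: complex and j :: nat
  assumes module: "downup_module sc (monom (C * (s - r ^ j)) j) r s U D Hh"
    and r0: "r \<noteq> 0" and s0: "s \<noteq> 0"
begin

lemma lin_U: "lin U" and lin_D: "lin D" and lin_Hh: "lin Hh"
  and hu: "Hh (U x) = sc r (U (Hh x))"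
  and dh: "D (Hh x) = sc r (Hh (D x))"
  and du: "D (U x) - sc s (U (D x)) = sc (C * (s - r ^ j)) ((Hh ^^ j) x)"
  using module vector_space_axioms by (simp_all add: downup_module_def poly_op_monom)

definition Psi :: "'m \<Rightarrow> 'm" where "Psi x = sc C ((Hh ^^ j) x)"
definition H :: "'m \<Rightarrow> 'm" where "H x = U (D x) + Psi x"

lemma lin_Psi: "lin Psi" and lin_H: "lin H"
  using lin_closed lin_funpow lin_U lin_D lin_Hh unfolding Psi_def[abs_def] H_def[abs_def]
  by metis+

lemmas scale_ops =
  lin_scale[OF lin_U] lin_scale[OF lin_D] lin_scale[OF lin_Hh] lin_scale[OF lin_Psi]
  lin_scale[OF lin_H] lin_scale[OF lin_funpow[OF lin_U]] lin_scale[OF lin_funpow[OF lin_D]]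
  lin_scale[OF lin_funpow[OF lin_Hh]]

lemma Hhpow_U: "(Hh ^^ k) (U x) = sc (r ^ k) (U ((Hh ^^ k) x))"
  by (induct k) (auto simp: hu scale_ops mult.commute)

lemma D_Hhpow: "D ((Hh ^^ k) x) = sc (r ^ k) ((Hh ^^ k) (D x))"
  by (induct k) (auto simp: dh scale_ops mult.commute)

lemma Hh_Upow: "Hh ((U ^^ k) x) = sc (r ^ k) ((U ^^ k) (Hh x))"
  by (induct k) (auto simp: hu scale_ops mult.commute)

lemma Dpow_Hh: "(D ^^ k) (Hh x) = sc (r ^ k) (Hh ((D ^^ k) x))"
  by (induct k) (auto simp: dh scale_ops mult.commute)

text \<open>Psi = psi(h) is homogeneous of degree j in h, so u and d twist it by r^j.\<close>

lemma Psi_U: "Psi (U x) = sc (r ^ j) (U (Psi x))"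
  by (simp add: Psi_def Hhpow_U scale_ops mult.commute)

lemma D_Psi: "D (Psi x) = sc (r ^ j) (Psi (D x))"
  by (simp add: Psi_def D_Hhpow scale_ops mult.commute)

lemma Psi_Hh: "Psi (Hh x) = Hh (Psi x)"
  by (simp add: Psi_def scale_ops funpow_swap1)

lemma Psi_pow: "(Psi ^^ k) x = sc (C ^ k) ((Hh ^^ (j * k)) x)"
  by (induct k) (simp_all add: Psi_def scale_ops funpow_add)

lemma DU: "D (U x) = sc s (H x) - sc (r ^ j) (Psi x)"
  using du[of x] by (simp add: H_def Psi_def algebra_simps)

lemma H_U: "H (U x) = sc s (U (H x))"
  by (simp add: H_def DU Psi_U lin_diff[OF lin_U] scale_ops)

lemma D_H: "D (H x) = sc s (H (D x))"
  by (simp add: H_def lin_add[OF lin_D] DU D_Psi)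

lemma H_Hh: "H (Hh x) = Hh (H x)"
  by (simp add: H_def dh hu Psi_Hh scale_ops lin_add[OF lin_Hh])

lemma H_Psi: "H (Psi x) = Psi (H x)"
proof -
  have "H ((Hh ^^ k) x) = (Hh ^^ k) (H x)" for k x
    by (induct k) (simp_all add: H_Hh)
  then show ?thesis by (simp add: Psi_def scale_ops)
qed

lemma Hpow_Psi: "(H ^^ k) (Psi x) = Psi ((H ^^ k) x)"
  by (induct k) (simp_all add: H_Psi)

lemma H_Upow: "H ((U ^^ k) x) = sc (s ^ k) ((U ^^ k) (H x))"
  by (induct k) (auto simp: H_U scale_ops mult.commute)

lemma Psi_Upow: "Psi ((U ^^ k) x) = sc (r ^ (j * k)) ((U ^^ k) (Psi x))"
  by (induct k) (auto simp: Psi_U scale_ops power_add mult.commute)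

lemma Dpow_H: "(D ^^ k) (H x) = sc (s ^ k) (H ((D ^^ k) x))"
  by (induct k) (auto simp: D_H scale_ops mult.commute)

lemma Dpow_Psi: "(D ^^ k) (Psi x) = sc (r ^ (j * k)) (Psi ((D ^^ k) x))"
  by (induct k) (auto simp: D_Psi scale_ops power_add mult.commute)

text \<open>When r^(jn) = s^n, the powers u^n and d^n are normal: d u^n = s^n u^n d and
  d^n u = s^n u d^n.  This makes their kernels submodules.\<close>

lemma D_Upow:
  assumes "r ^ (j * n) = s ^ n"
  shows "D ((U ^^ n) x) = sc (s ^ n) ((U ^^ n) (D x))"
proof (cases n)
  case (Suc k)
  have "D ((U ^^ n) x) = sc s (H ((U ^^ k) x)) - sc (r ^ j) (Psi ((U ^^ k) x))"
    by (simp add: Suc DU)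
  also have "\<dots> = sc (s ^ n) ((U ^^ k) (H x - Psi x))"
    using assms by (simp add: Suc H_Upow Psi_Upow power_add lin_diff[OF lin_funpow[OF lin_U]]
        scale_ops scale_right_diff_distrib)
  also have "\<dots> = sc (s ^ n) ((U ^^ n) (D x))"
    by (simp add: Suc H_def funpow_Suc_right del: funpow.simps)
  finally show ?thesis .
qed simp

lemma Dpow_U:
  assumes "r ^ (j * n) = s ^ n"
  shows "(D ^^ n) (U x) = sc (s ^ n) (U ((D ^^ n) x))"
proof (cases n)
  case (Suc k)
  have "(D ^^ n) (U x) = (D ^^ k) (sc s (H x) - sc (r ^ j) (Psi x))"
    by (simp add: Suc DU funpow_Suc_right del: funpow.simps)
  also have "\<dots> = sc (s ^ n) (H ((D ^^ k) x) - Psi ((D ^^ k) x))"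
    using assms by (simp add: Suc lin_diff[OF lin_funpow[OF lin_D]] scale_ops Dpow_H Dpow_Psi
        power_add scale_right_diff_distrib)
  also have "\<dots> = sc (s ^ n) (U ((D ^^ n) x))"
    by (simp add: Suc H_def)
  finally show ?thesis .
qed simp

end

locale annihilated_simple_module = downup_monomial sc U D Hh r s C j
  for sc :: "complex \<Rightarrow> 'm::ab_group_add \<Rightarrow> 'm" and U D Hh r s C j +
  fixes m :: nat
  assumes C0: "C \<noteq> 0"
    and nontrivial: "\<exists>x::'m. x \<noteq> 0"
    and simple: "\<And>N. subspace N \<Longrightarrow> U ` N \<subseteq> N \<Longrightarrow> D ` N \<subseteq> N \<Longrightarrow> Hh ` N \<subseteq> N
                    \<Longrightarrow> N = {0} \<or> N = UNIV"
    and Hh_surj: "surj Hh"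
    and m_pos: "m > 0"
    and rel_m: "r ^ (j * m) = s ^ m"
    and primitive: "0 < k \<Longrightarrow> k < m \<Longrightarrow> r ^ (j * k) \<noteq> s ^ k"
    and ann: "((\<lambda>y. U (D y) + sc C ((Hh ^^ j) y)) ^^ m) x = sc (C ^ m) ((Hh ^^ (j * m)) x)"
begin

lemma kernel_trivial_or_all:
  assumes "lin f"
    and "\<And>x. f x = 0 \<Longrightarrow> f (U x) = 0" "\<And>x. f x = 0 \<Longrightarrow> f (D x) = 0"
    and "\<And>x. f x = 0 \<Longrightarrow> f (Hh x) = 0"
  shows "(\<forall>x. f x = 0 \<longrightarrow> x = 0) \<or> (\<forall>x. f x = 0)"
proof -
  have "subspace {x. f x = 0}"
    by (rule subspaceI) (auto simp: lin_zero lin_add lin_scale assms(1))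
  moreover have "U ` {x. f x = 0} \<subseteq> {x. f x = 0}" "D ` {x. f x = 0} \<subseteq> {x. f x = 0}"
    "Hh ` {x. f x = 0} \<subseteq> {x. f x = 0}" using assms by auto
  ultimately have "{x. f x = 0} = {0} \<or> {x. f x = 0} = UNIV" by (rule simple)
  then show ?thesis by auto
qed

text \<open>h is injective: its kernel is a submodule, and it is not all of M since h is onto.\<close>

lemma Hh_inj: "Hh x = 0 \<Longrightarrow> x = 0"
proof -
  have "(\<forall>x. Hh x = 0 \<longrightarrow> x = 0) \<or> (\<forall>x. Hh x = 0)"
  proof (rule kernel_trivial_or_all[OF lin_Hh])
    fix x assume "Hh x = 0"
    then show "Hh (U x) = 0" "Hh (Hh x) = 0" "Hh (D x) = 0"
      using hu[of x] dh[of x] r0 by (simp_all add: lin_zero[OF lin_U] lin_zero[OF lin_D]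
          lin_zero[OF lin_Hh])
  qed
  moreover obtain y :: 'm where "y \<noteq> 0" using nontrivial by blast
  then have "\<not> (\<forall>x. Hh x = 0)" using Hh_surj by (metis surjD)
  ultimately show "Hh x = 0 \<Longrightarrow> x = 0" by blast
qed

lemma Psi_pow_inj: "(Psi ^^ k) x = 0 \<Longrightarrow> x = 0"
proof -
  have "(Hh ^^ n) y = 0 \<Longrightarrow> y = 0" for n y
    by (induct n arbitrary: y) (auto dest: Hh_inj)
  then show "(Psi ^^ k) x = 0 \<Longrightarrow> x = 0" using C0 by (simp add: Psi_pow)
qed

lemma Hpow_m: "(H ^^ m) x = (Psi ^^ m) x"
proof -
  have "H = (\<lambda>y. U (D y) + sc C ((Hh ^^ j) y))" by (auto simp: H_def Psi_def)
  then show ?thesis by (simp add: ann Psi_pow mult.commute)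
qed

lemma Upow_dichotomy: "(\<forall>x. (U ^^ m) x = 0 \<longrightarrow> x = 0) \<or> (\<forall>x. (U ^^ m) x = 0)"
proof (rule kernel_trivial_or_all[OF lin_funpow[OF lin_U]])
  fix x assume A: "(U ^^ m) x = 0"
  show "(U ^^ m) (U x) = 0" using A by (simp add: funpow_swap1[symmetric] lin_zero[OF lin_U])
  show "(U ^^ m) (D x) = 0" using D_Upow[OF rel_m, of x] A s0 by (simp add: lin_zero[OF lin_D])
  show "(U ^^ m) (Hh x) = 0" using Hh_Upow[of m x] A r0 by (simp add: lin_zero[OF lin_Hh])
qed

lemma Dpow_dichotomy: "(\<forall>x. (D ^^ m) x = 0 \<longrightarrow> x = 0) \<or> (\<forall>x. (D ^^ m) x = 0)"
proof (rule kernel_trivial_or_all[OF lin_funpow[OF lin_D]])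
  fix x assume A: "(D ^^ m) x = 0"
  show "(D ^^ m) (D x) = 0" using A by (simp add: funpow_swap1[symmetric] lin_zero[OF lin_D])
  show "(D ^^ m) (U x) = 0" using Dpow_U[OF rel_m, of x] A by (simp add: lin_zero[OF lin_U])
  show "(D ^^ m) (Hh x) = 0" using Dpow_Hh[of m x] A by (simp add: lin_zero[OF lin_Hh])
qed

definition omega :: complex where "omega = r ^ j / s"

lemma omega_pow_m: "omega ^ m = 1"
  using rel_m s0 by (simp add: omega_def power_divide power_mult[symmetric])

lemma omega_primitive: "0 < k \<Longrightarrow> k < m \<Longrightarrow> omega ^ k \<noteq> 1"
  using primitive[of k] s0 by (simp add: omega_def power_divide power_mult[symmetric])

lemma omega_power_sum:
  assumes "e < m" shows "(\<Sum>l<m. (omega ^ e) ^ l) = (if e = 0 then of_nat m else 0)"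
proof (cases "e = 0")
  case False
  then have "omega ^ e \<noteq> 1" using omega_primitive assms by auto
  moreover have "(omega ^ e) ^ m = 1" using omega_pow_m by (metis power_mult mult.commute power_one)
  ultimately show ?thesis using geometric_sum[of "omega ^ e" m] False by simp
qed simp

text \<open>Telescoping: (H - q Psi) applied to sum_k q^(n-1-k) H^k Psi^(n-1-k) x gives
  H^n x - q^n Psi^n x, because H and Psi commute.\<close>

definition twisted_sum :: "complex \<Rightarrow> nat \<Rightarrow> 'm \<Rightarrow> 'm" where
  "twisted_sum q n x = (\<Sum>k<n. sc (q ^ (n - 1 - k)) ((H ^^ k) ((Psi ^^ (n - 1 - k)) x)))"

lemma twisted_sum_Suc: "twisted_sum q (Suc n) x = (H ^^ n) x + sc q (Psi (twisted_sum q n x))"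
proof -
  have "sc q (Psi (twisted_sum q n x)) =
      (\<Sum>k<n. sc (q ^ (Suc n - 1 - k)) ((H ^^ k) ((Psi ^^ (Suc n - 1 - k)) x)))"
    unfolding twisted_sum_def
  proof (simp add: lin_sum[OF lin_Psi] scale_sum_right scale_ops, rule sum.cong)
    fix k assume "k \<in> {..<n}"
    then have e: "n - k = Suc (n - Suc k)" by auto
    show "sc (q * q ^ (n - Suc k)) (Psi ((H ^^ k) ((Psi ^^ (n - Suc k)) x))) =
          sc (q ^ (n - k)) ((H ^^ k) ((Psi ^^ (n - k)) x))"
      by (simp only: e power_Suc funpow.simps o_apply Hpow_Psi)
  qed simp
  then show ?thesis by (simp add: twisted_sum_def)
qed

lemma twisted_sum_telescopes:
  "H (twisted_sum q n x) - sc q (Psi (twisted_sum q n x)) = (H ^^ n) x - sc (q ^ n) ((Psi ^^ n) x)"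
proof (induct n)
  case 0
  then show ?case by (simp add: twisted_sum_def lin_zero[OF lin_H] lin_zero[OF lin_Psi])
next
  case (Suc n)
  have "H (twisted_sum q (Suc n) x) - sc q (Psi (twisted_sum q (Suc n) x)) =
    (H ^^ Suc n) x - sc q (Psi ((H ^^ n) x))
      + sc q (Psi (H (twisted_sum q n x) - sc q (Psi (twisted_sum q n x))))"
    by (simp add: twisted_sum_Suc lin_add[OF lin_H] lin_add[OF lin_Psi] lin_diff[OF lin_Psi]
        scale_ops H_Psi scale_right_diff_distrib algebra_simps)
  also have "\<dots> = (H ^^ Suc n) x - sc (q ^ Suc n) ((Psi ^^ Suc n) x)"
    by (simp add: Suc lin_diff[OF lin_Psi] scale_ops Hpow_Psi[symmetric]
        scale_right_diff_distrib funpow_swap1)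
  finally show ?case .
qed

context
  assumes U_inj: "\<And>x. U x = 0 \<Longrightarrow> x = 0" and D_inj: "\<And>x. D x = 0 \<Longrightarrow> x = 0"
begin

lemma eigen_shift:
  assumes "H z = sc q (Psi z)" shows "H ((D ^^ k) z) = sc (q * omega ^ k) (Psi ((D ^^ k) z))"
proof (induct k)
  case (Suc k)
  let ?w = "(D ^^ k) z"
  have "sc s (H (D ?w)) = D (H ?w)" by (simp add: D_H)
  also have "\<dots> = sc s (sc (q * omega ^ Suc k) (Psi (D ?w)))"
    using Suc s0 by (simp add: scale_ops D_Psi omega_def)
  finally have "sc s (H (D ?w)) = sc s (sc (q * omega ^ Suc k) (Psi (D ?w)))" .
  then show ?case using s0 by (simp only: scale_cancel_left funpow.simps o_apply) simp
qed (simp add: assms)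

text \<open>H - omega^l Psi is injective for l < m: moving by d^(m-l) reaches ker(ud) = 0.\<close>

lemma eigen_trivial:
  assumes "l < m" "H z = sc (omega ^ l) (Psi z)" shows "z = 0"
proof -
  define w where "w = (D ^^ (m - l)) z"
  have "H w = sc (omega ^ l * omega ^ (m - l)) (Psi w)"
    unfolding w_def by (rule eigen_shift[OF assms(2)])
  also have "omega ^ l * omega ^ (m - l) = 1"
    using assms(1) omega_pow_m by (simp add: power_add[symmetric])
  finally have "U (D w) = 0" by (simp add: H_def)
  then have "w = 0" by (auto dest: U_inj D_inj)
  moreover have "(D ^^ n) y = 0 \<Longrightarrow> y = 0" for n y
    by (induct n arbitrary: y) (auto dest: D_inj)
  ultimately show ?thesis unfolding w_def by blast
qed

lemma twisted_sum_vanishes: "l < m \<Longrightarrow> twisted_sum (omega ^ l) m x = 0"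
proof -
  assume l: "l < m"
  have "(omega ^ l) ^ m = 1" using omega_pow_m by (metis power_mult mult.commute power_one)
  then have "H (twisted_sum (omega ^ l) m x) = sc (omega ^ l) (Psi (twisted_sum (omega ^ l) m x))"
    using twisted_sum_telescopes[of "omega ^ l" m x] by (simp add: Hpow_m)
  then show ?thesis using l by (rule eigen_trivial[rotated])
qed

text \<open>Averaging the vanishing twisted sums over all m-th roots of unity isolates m H^(m-1).\<close>

lemma Hpow_pred_zero: "(H ^^ (m - 1)) x = 0"
proof -
  define v where "v k = (H ^^ k) ((Psi ^^ (m - 1 - k)) x)" for k
  have "0 = (\<Sum>l<m. twisted_sum (omega ^ l) m x)" by (simp add: twisted_sum_vanishes)
  also have "\<dots> = (\<Sum>l<m. \<Sum>k<m. sc ((omega ^ (m - 1 - k)) ^ l) (v k))"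
    unfolding twisted_sum_def v_def by (simp add: power_mult[symmetric] mult.commute)
  also have "\<dots> = (\<Sum>k<m. sc (\<Sum>l<m. (omega ^ (m - 1 - k)) ^ l) (v k))"
    by (subst sum.swap) (simp add: scale_sum_left)
  also have "\<dots> = (\<Sum>k<m. sc (if k = m - 1 then of_nat m else 0) (v k))"
    by (rule sum.cong) (auto simp: omega_power_sum)
  also have "\<dots> = sc (of_nat m) (v (m - 1))"
    using m_pos by (simp add: if_distrib[of "\<lambda>a. sc a _"] sum.delta cong: if_cong)
  finally show ?thesis using m_pos by (simp add: v_def)
qed

lemma injective_U_D_impossible: False
proof -
  obtain y :: 'm where y: "y \<noteq> 0" using nontrivial by blast
  have "(H ^^ m) y = H ((H ^^ (m - 1)) y)"
    using m_pos by (metis Suc_diff_1 comp_apply funpow.simps(2))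
  then have "(Psi ^^ m) y = 0" using Hpow_pred_zero[of y] by (simp add: Hpow_m lin_zero[OF lin_H])
  then show False using y by (auto dest: Psi_pow_inj)
qed

end

theorem Upow_or_Dpow_zero: "(\<forall>x. (U ^^ m) x = 0) \<or> (\<forall>x. (D ^^ m) x = 0)"
proof (rule ccontr)
  assume "\<not> ?thesis"
  then have Um: "(U ^^ m) x = 0 \<Longrightarrow> x = 0" and Dm: "(D ^^ m) x = 0 \<Longrightarrow> x = 0" for x
    using Upow_dichotomy Dpow_dichotomy by blast+
  obtain k where k: "m = Suc k" using m_pos by (cases m) auto
  have "U x = 0 \<Longrightarrow> x = 0" for x
    using Um[of x] by (simp add: k funpow_Suc_right lin_zero[OF lin_funpow[OF lin_U]] del: funpow.simps)
  moreover have "D x = 0 \<Longrightarrow> x = 0" for x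
    using Dm[of x] by (simp add: k funpow_Suc_right lin_zero[OF lin_funpow[OF lin_D]] del: funpow.simps)
  ultimately show False by (rule injective_U_D_impossible)
qed

end

lemma conformal_monomial:
  fixes phi psi :: "complex poly"
  assumes "\<forall>x. s * poly psi x - poly psi (r * x) = poly phi x" and "psi = monom C j"
  shows "phi = monom (C * (s - r ^ j)) j"
proof -
  have "poly phi = poly (monom (C * (s - r ^ j)) j)"
  proof
    fix x
    show "poly phi x = poly (monom (C * (s - r ^ j)) j) x"
      using assms(1)[rule_format, of x] by (simp add: assms(2) poly_monom power_mult_distrib algebra_simps)
  qed
  then show ?thesis by (simp add: poly_eq_poly_eq_iff)
qed

lemma S_rs_generator:
  assumes S: "S_rs r s = {(n * int (j * m), n * int m) | n. True}"
  shows "r ^ (j * m) = s ^ m"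
proof -
  have "(int (j * m), int m) \<in> S_rs r s" unfolding S by (intro CollectI exI[of _ 1]) simp
  then have "r powi int (j * m) = s powi int m" unfolding S_rs_def by simp
  then show ?thesis by (simp only: power_int_of_nat)
qed

lemma S_rs_generator_minimal:
  assumes S: "S_rs r s = {(n * int (j * m), n * int m) | n. True}" and k: "0 < k" "k < m"
  shows "r ^ (j * k) \<noteq> s ^ k"
proof
  assume "r ^ (j * k) = s ^ k"
  then have "r powi int (j * k) = s powi int k" by (simp only: power_int_of_nat)
  then have "(int (j * k), int k) \<in> S_rs r s" unfolding S_rs_def by simp
  then obtain n where n: "int k = n * int m" unfolding S by auto
  with k have "0 < n * int m" by simp
  with k have "n > 0" by (simp add: zero_less_mult_iff)
  then have "int m \<le> int k" using n by (simp add: mult_le_cancel_right1)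
  with k show False by simp
qed

theorem mainTheorem12:
  fixes sc :: "complex \<Rightarrow> 'm::ab_group_add \<Rightarrow> 'm"
    and phi psi :: "complex poly"
    and r s C :: complex
    and j m :: nat
    and U D Hh :: "'m \<Rightarrow> 'm"
  assumes r0: "r \<noteq> 0" and s0: "s \<noteq> 0"
    and conformal: "\<forall>x. s * poly psi x - poly psi (r * x) = poly phi x"
    and not_both_roots: "\<not> (root_of_unity r \<and> root_of_unity s)"
    and m_pos: "m > 0"
    and S_gen: "S_rs r s = {(n * int (j * m), n * int m) | n. True}"
    and psi_eq: "psi = monom C j" and C0: "C \<noteq> 0"
    and simple: "simple_downup_module sc phi r s U D Hh"
    and hM: "surj Hh"
    and HM: "surj (\<lambda>x. U (D x) + poly_op sc psi Hh x)"
    and ann: "\<forall>x. ((\<lambda>y. U (D y) + poly_op sc psi Hh y) ^^ m) x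
                  = sc (C ^ m) ((Hh ^^ (j * m)) x)"
  shows "(\<forall>x. (U ^^ m) x = 0) \<or> (\<forall>x. (D ^^ m) x = 0)"
proof -
  have phi: "phi = monom (C * (s - r ^ j)) j"
    using conformal psi_eq by (rule conformal_monomial)
  have module: "downup_module sc phi r s U D Hh" and vs: "vector_space sc"
    using simple by (simp_all add: simple_downup_module_def downup_module_def)
  interpret annihilated_simple_module sc U D Hh r s C j m
  proof (unfold_locales)
    show "((\<lambda>y. U (D y) + sc C ((Hh ^^ j) y)) ^^ m) x = sc (C ^ m) ((Hh ^^ (j * m)) x)" for x
      using ann vs by (simp add: psi_eq poly_op_monom)
    show "r ^ (j * m) = s ^ m" using S_gen by (rule S_rs_generator)
    show "0 < k \<Longrightarrow> k < m \<Longrightarrow> r ^ (j * k) \<noteq> s ^ k" for k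
      using S_gen by (rule S_rs_generator_minimal)
  qed (use vs module phi simple r0 s0 C0 hM m_pos in
      \<open>auto simp: simple_downup_module_def vector_space_def\<close>)
  show ?thesis by (rule Upow_or_Dpow_zero)
qed

end
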